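(* Let $\mathbf n\ge 2$, let $A=B=C$ be the space of $\mathbf n\times\mathbf n$ complex matrices, and let $M_{\langle\mathbf n\rangle}\in A\otimes B\otimes C$ be the matrix multiplication tensor. Let $r=2\mathbf n^2-2$ and suppose that $$M_{\langle\mathbf n\rangle}=\sum_{\substack{i,j,k\ge 1\\ i+j+k\le r+2}} a_i\otimes b_j\otimes c_k$$ for some vectors $a_1,\dots,a_r\in A$, $b_1,\dots,b_r\in B$, $c_1,\dots,c_r\in C$ (so that $M_{\langle\mathbf n\rangle}$ lies in the open bud $\mathfrak b^\circ_r(Seg(\mathbb PA\times\mathbb PB\times\mathbb PC),[a_1\otimes b_1\otimes c_1])$; here $[a_1\otimes b_1\otimes c_1]$ is assumed to lie in $\mathcal K$). Then: (1) no two of the three sets $\{a_1,\dots,a_{\mathbf n^2}\}$, $\{b_1,\dots,b_{\mathbf n^2}\}$, $\{c_1,\dots,c_{\mathbf n^2}\}$ can both be linearly independent; and (2) each of $\dim\langle a_1,\dots,a_{2\mathbf n^2-\mathbf n-1}\rangle$, $\dim\langle b_1,\dots,b_{2\mathbf n^2-\mathbf n-1}\rangle$, $\dim\langle c_1,\dots,c_{2\mathbf n^2-\mathbf n-1}\rangle$ is at least $\mathbf n^2$.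
   Context: With $U,V,W\cong\mathbb C^{\mathbf n}$, $A=U^*\otimes V$, $B=V^*\otimes W$, $C=W^*\otimes U$, and $M_{\langle\mathbf n\rangle}=\mathrm{Id}_U\otimes\mathrm{Id}_V\otimes\mathrm{Id}_W$ (factors reordered); in bases, $M_{\langle\mathbf n\rangle}=\sum_{i,j,k=1}^{\mathbf n}x^i_j\otimes y^j_k\otimes z^k_i$. $\mathcal K$ is the set of $[\mu\otimes v\otimes\nu\otimes w\otimes\omega\otimes u]$ with $a=\mu\otimes v$, $b=\nu\otimes w$, $c=\omega\otimes u$ and $\mu(u)=\omega(w)=\nu(v)=0$. *)

theory Defs
  imports Complex_Main "HOL-Library.Function_Algebras" "HOL-Library.Cardinality"
begin

text \<open>Vectors of the spaces A = B = C are n x n complex matrices, encoded as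
  functions of type ('n \<times> 'n \<Rightarrow> complex) with CARD('n) = n.
  A matrix a has entry a (i,j) = coefficient of the basis vector x^i_j.\<close>

definition fscale :: "complex \<Rightarrow> ('a \<Rightarrow> complex) \<Rightarrow> ('a \<Rightarrow> complex)" where
  "fscale c f = (\<lambda>x. c * f x)"

interpretation fsp: vector_space "fscale :: complex \<Rightarrow> ('a \<Rightarrow> complex) \<Rightarrow> _"
  by unfold_locales (auto simp: fscale_def fun_eq_iff algebra_simps)

definition lin_indep_family :: "nat set \<Rightarrow> (nat \<Rightarrow> 'a \<Rightarrow> complex) \<Rightarrow> bool" where
  "lin_indep_family S f \<longleftrightarrow> inj_on f S \<and> fsp.independent (f ` S)"

text \<open>The matrix multiplication tensor M = sum x^i_j \<otimes> y^j_k \<otimes> z^k_i, as a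
  function of the three (pair) indices.\<close>
definition matmul_tensor :: "('n \<times> 'n) \<Rightarrow> ('n \<times> 'n) \<Rightarrow> ('n \<times> 'n) \<Rightarrow> complex" where
  "matmul_tensor x y z = (if snd x = fst y \<and> snd y = fst z \<and> snd z = fst x then 1 else 0)"

text \<open>[a \<otimes> b \<otimes> c] lies in K: a = \<mu>\<otimes>v, b = \<nu>\<otimes>w, c = \<omega>\<otimes>u (all factors nonzero,
  so that the point is defined) with \<mu>(u) = \<omega>(w) = \<nu>(v) = 0.\<close>
definition in_K :: "('n \<times> 'n \<Rightarrow> complex) \<Rightarrow> ('n \<times> 'n \<Rightarrow> complex) \<Rightarrow> ('n \<times> 'n \<Rightarrow> complex) \<Rightarrow> bool" where
  "in_K a b c \<longleftrightarrow> (\<exists>\<mu> v \<nu> w \<omega> u :: 'n \<Rightarrow> complex.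
     \<mu> \<noteq> 0 \<and> v \<noteq> 0 \<and> \<nu> \<noteq> 0 \<and> w \<noteq> 0 \<and> \<omega> \<noteq> 0 \<and> u \<noteq> 0 \<and>
     a = (\<lambda>(i,j). \<mu> i * v j) \<and> b = (\<lambda>(j,k). \<nu> j * w k) \<and> c = (\<lambda>(k,i). \<omega> k * u i) \<and>
     (\<Sum>i\<in>UNIV. \<mu> i * u i) = 0 \<and> (\<Sum>k\<in>UNIV. \<omega> k * w k) = 0 \<and> (\<Sum>j\<in>UNIV. \<nu> j * v j) = 0)"

end

theory Submission
  imports Defs
begin

text \<open>Contracting \<open>M\<langle>n\<rangle>\<close> with functionals \<open>\<xi>\<close> on \<open>A\<close> and \<open>\<eta>\<close> on \<open>B\<close> gives the matrix
  product \<open>\<xi> \<eta> \<in> C\<close>, while the bud decomposition writes it as \<open>\<Sum> \<xi>(a i) \<eta>(b j) c k\<close> over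
  \<open>i + j + k \<le> r + 2 = 2 n\<^sup>2\<close>.

  If \<open>a 1, \<dots>, a m\<close> with \<open>m = 2 n\<^sup>2 - n - 1\<close> spanned less than \<open>A\<close>, a nonzero \<open>\<xi>\<close> would
  kill them; then only terms with \<open>k \<le> n - 1\<close> survive, and the \<open>n\<close> independent products of
  \<open>\<xi>\<close> with the elementary matrices of one row would lie in \<open>\<langle>c 1, \<dots>, c (n - 1)\<rangle>\<close>.

  If \<open>a 1, \<dots>, a N\<close> and \<open>b 1, \<dots>, b N\<close> (\<open>N = n\<^sup>2\<close>) were bases, let \<open>\<alpha>\<close> and \<open>\<beta>\<close> be
  the functionals dual to \<open>a N\<close> and \<open>b N\<close>. The products \<open>\<zeta> \<beta>\<close> form a triangular system
  filling exactly \<open>\<langle>c 1, \<dots>, c (N - 1)\<rangle>\<close>, which also contains every \<open>\<alpha> \<eta>\<close>; this forces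
  \<open>\<beta>\<close> to be invertible, so \<open>\<langle>c 1, \<dots>, c (N - 1)\<rangle> = C\<close>, which is absurd. The cyclic
  symmetry of \<open>M\<langle>n\<rangle>\<close> gives the statements for the other factors.\<close>

definition contract :: "('a::finite \<Rightarrow> complex) \<Rightarrow> ('a \<Rightarrow> complex) \<Rightarrow> complex" where
  "contract \<xi> f = (\<Sum>x\<in>UNIV. \<xi> x * f x)"

definition std_basis :: "'a \<Rightarrow> 'a \<Rightarrow> complex" where
  "std_basis x0 = (\<lambda>x. if x = x0 then 1 else 0)"

lemma sum_fun_apply: "(\<Sum>i\<in>A. f i) x = (\<Sum>i\<in>A. f i x)"
  by (induct A rule: infinite_finite_induct) auto

lemma independent_if_diagonal:
  fixes g :: "'t \<Rightarrow> 'a \<Rightarrow> complex" and w :: "'t \<Rightarrow> 'a"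
  assumes diag: "\<And>t. g t (w t) \<noteq> 0" and off_diag: "\<And>t t'. t \<noteq> t' \<Longrightarrow> g t (w t') = 0"
  shows "fsp.independent (range g)" and "inj g"
proof -
  show "inj g"
    by (metis injI diag off_diag)
  show "fsp.independent (range g)"
    unfolding fsp.independent_explicit_finite_subsets
  proof (intro allI impI ballI)
    fix S u v
    assume S: "S \<subseteq> range g" "finite S" and sum0: "(\<Sum>v\<in>S. fscale (u v) v) = 0" and v: "v \<in> S"
    then obtain t where t: "v = g t" by blast
    have others: "(\<Sum>v'\<in>S - {v}. u v' * v' (w t)) = 0"
    proof (rule sum.neutral, rule ballI)
      fix v' assume "v' \<in> S - {v}"
      then obtain t' where "v' = g t'" "t' \<noteq> t" using S t by blast
      thus "u v' * v' (w t) = 0" using off_diag[of t' t] by simp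
    qed
    have "0 = (\<Sum>v'\<in>S. u v' * v' (w t))"
      using fun_cong[OF sum0, of "w t"] by (simp add: sum_fun_apply fscale_def)
    also have "\<dots> = u v * v (w t)"
      using sum.remove[OF S(2) v, of "\<lambda>v'. u v' * v' (w t)"] others by simp
    finally show "u v = 0" using diag t by simp
  qed
qed

lemma independent_std_basis: "fsp.independent (range (std_basis :: 'a::finite \<Rightarrow> _))"
  and inj_std_basis: "inj (std_basis :: 'a::finite \<Rightarrow> _)"
  by (rule independent_if_diagonal[where w=id]; simp add: std_basis_def)+

lemma card_range_std_basis: "card (range (std_basis :: 'a::finite \<Rightarrow> _)) = CARD('a)"
  by (simp add: card_image[OF inj_std_basis])

lemma sum_std_basis_expansion: "(\<Sum>x\<in>UNIV. fscale (f x) (std_basis x)) = (f::'a::finite \<Rightarrow> complex)"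
  by (rule ext) (simp add: sum_fun_apply fscale_def std_basis_def if_distrib cong: if_cong)

lemma span_std_basis: "fsp.span (range (std_basis :: 'a::finite \<Rightarrow> _)) = UNIV"
proof -
  have "f \<in> fsp.span (range std_basis)" for f :: "'a \<Rightarrow> complex"
    by (subst sum_std_basis_expansion[symmetric])
       (intro fsp.span_sum fsp.span_scale fsp.span_base; simp)
  thus ?thesis by auto
qed

interpretation fdv: finite_dimensional_vector_space
    "fscale :: complex \<Rightarrow> ('a::finite \<Rightarrow> complex) \<Rightarrow> _" "range std_basis"
  by unfold_locales (auto simp: independent_std_basis span_std_basis)

lemma independent_in_span_card_le:
  assumes "fsp.independent T" and "T \<subseteq> fsp.span (f ` {1..<K})"
  shows "card T \<le> K - 1"
proof -
  have "card T \<le> card (f ` {1..<K})"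
    using fsp.independent_span_bound[OF _ assms] by simp
  also have "\<dots> \<le> K - 1"
    using card_image_le[of "{1..<K}" f] by simp
  finally show ?thesis .
qed

lemma contract_std_basis [simp]: "contract \<xi> (std_basis x) = \<xi> x"
  by (simp add: contract_def std_basis_def if_distrib cong: if_cong)

lemma subspace_kernel_contract: "fsp.subspace {f. contract \<xi> f = 0}"
  unfolding fsp.subspace_def
  by (auto simp: contract_def fscale_def sum.distrib algebra_simps sum_distrib_left[symmetric])

lemma contract_eq_0_if_span_UNIV:
  assumes "\<And>f. f \<in> S \<Longrightarrow> contract \<xi> f = 0" and "fsp.span S = UNIV"
  shows "\<xi> = 0"
proof
  fix x
  have "std_basis x \<in> fsp.span S" using assms(2) by simp
  hence "contract \<xi> (std_basis x) = 0"
    using fsp.span_minimal[of S "{f. contract \<xi> f = 0}"] assms(1) subspace_kernel_contract by blast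
  thus "\<xi> x = 0 x" by simp
qed

lemma exists_annihilator:
  fixes S :: "('a::finite \<Rightarrow> complex) set"
  assumes "fsp.dim S < CARD('a)"
  obtains \<xi> where "\<xi> \<noteq> 0" and "\<And>f. f \<in> S \<Longrightarrow> contract \<xi> f = 0"
proof -
  obtain Bs where Bs: "Bs \<subseteq> S" "fsp.independent Bs" "S \<subseteq> fsp.span Bs"
    by (rule fsp.maximal_independent_subset[of S])
  obtain B where B: "Bs \<subseteq> B" "fsp.independent B" "UNIV \<subseteq> fsp.span B"
    by (rule fsp.maximal_independent_subset_extend[of Bs UNIV]) (use Bs(2) in auto)
  have span_B: "fsp.span B = UNIV" using B(3) by auto
  have "\<not> B \<subseteq> fsp.span S"
  proof
    assume "B \<subseteq> fsp.span S"
    hence "fsp.span B \<subseteq> fsp.span S" by (metis fsp.span_minimal fsp.subspace_span)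
    hence "range std_basis \<subseteq> fsp.span S" using span_B by auto
    from fdv.independent_card_le_dim[OF this independent_std_basis]
    show False using assms by (simp add: card_range_std_basis)
  qed
  then obtain v0 where v0: "v0 \<in> B" "v0 \<notin> fsp.span S" by blast
  \<comment> \<open>the coordinate of \<open>v0\<close> with respect to the basis \<open>B\<close> vanishes on \<open>Bs\<close>, hence on \<open>S\<close>\<close>
  define g where "g v = fsp.representation B v v0" for v
  interpret g: Vector_Spaces.linear fscale "(*)" g
    unfolding g_def by (rule fsp.linear_representation[OF B(2) span_B])
  have g_Bs: "g b = 0" if "b \<in> Bs" for b
  proof -
    have "b \<in> B" "b \<noteq> v0" using that B(1) Bs(1) v0(2) fsp.span_base by blast+
    thus ?thesis unfolding g_def using fsp.representation_basis[OF B(2), of b] by simp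
  qed
  have g_S: "g f = 0" if "f \<in> S" for f
    by (rule g.eq_0_on_span[OF g_Bs]) (use that Bs(3) in auto)
  have g_v0: "g v0 = 1"
    unfolding g_def using fsp.representation_basis[OF B(2) v0(1)] by simp
  define \<xi> where "\<xi> x = g (std_basis x)" for x
  have g_contract: "g f = contract \<xi> f" for f
  proof -
    have "g f = g (\<Sum>x\<in>UNIV. fscale (f x) (std_basis x))" by (simp add: sum_std_basis_expansion)
    also have "\<dots> = contract \<xi> f" by (simp only: g.sum g.scale \<xi>_def contract_def mult.commute)
    finally show ?thesis .
  qed
  show ?thesis
  proof
    show "\<xi> \<noteq> 0" using g_v0 g_contract[of v0] by (auto simp: contract_def)
    show "contract \<xi> f = 0" if "f \<in> S" for f using g_S[OF that] g_contract by simp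
  qed
qed

lemma exists_annihilator_family:
  fixes f :: "nat \<Rightarrow> 'a::finite \<Rightarrow> complex"
  assumes "finite I" and "card I < CARD('a)"
  obtains \<xi> where "\<xi> \<noteq> 0" and "\<And>i. i \<in> I \<Longrightarrow> contract \<xi> (f i) = 0"
proof -
  have "fsp.dim (f ` I) \<le> card (f ` I)"
    by (rule fsp.dim_le_card) (auto intro: fsp.span_base assms)
  also have "\<dots> \<le> card I" by (rule card_image_le[OF assms(1)])
  finally obtain \<xi> where "\<xi> \<noteq> 0" "\<And>g. g \<in> f ` I \<Longrightarrow> contract \<xi> g = 0"
    using exists_annihilator assms(2) by (metis le_less_trans)
  thus ?thesis using that by blast
qed

lemma exists_dual_family:
  fixes f :: "nat \<Rightarrow> 'a::finite \<Rightarrow> complex"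
  assumes indep: "lin_indep_family I f" and fin: "finite I" and card: "card I = CARD('a)"
  obtains \<alpha> where "\<And>i i'. i \<in> I \<Longrightarrow> i' \<in> I \<Longrightarrow> contract (\<alpha> i) (f i') = (if i' = i then 1 else 0)"
proof -
  have span_UNIV: "fsp.span (f ` I) = UNIV"
    using fdv.card_ge_dim_independent[of "f ` I" UNIV] indep card unfolding lin_indep_family_def
    by (auto simp: card_image card_range_std_basis)
  have "\<exists>\<zeta>. \<forall>i'\<in>I. contract \<zeta> (f i') = (if i' = i then 1 else 0)" if i: "i \<in> I" for i
  proof -
    obtain \<zeta> where \<zeta>: "\<zeta> \<noteq> 0" "\<And>i'. i' \<in> I - {i} \<Longrightarrow> contract \<zeta> (f i') = 0"
      using exists_annihilator_family[of "I - {i}"] fin card i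
      by (metis card_Diff1_less finite_Diff)
    have "contract \<zeta> (f i) \<noteq> 0"
    proof
      assume "contract \<zeta> (f i) = 0"
      hence "contract \<zeta> g = 0" if "g \<in> f ` I" for g using that \<zeta>(2) by blast
      thus False using contract_eq_0_if_span_UNIV span_UNIV \<zeta>(1) by blast
    qed
    hence "\<forall>i'\<in>I. contract (\<lambda>x. \<zeta> x / contract \<zeta> (f i)) (f i') = (if i' = i then 1 else 0)"
      using \<zeta>(2) by (auto simp: contract_def sum_divide_distrib[symmetric])
    thus ?thesis by blast
  qed
  then obtain \<alpha> where "\<forall>i\<in>I. \<forall>i'\<in>I. contract (\<alpha> i) (f i') = (if i' = i then 1 else 0)"
    by metis
  thus ?thesis using that by blast
qed

definition matmul_contract ::
    "('n::finite \<times> 'n \<Rightarrow> complex) \<Rightarrow> ('n \<times> 'n \<Rightarrow> complex) \<Rightarrow> ('n \<times> 'n \<Rightarrow> complex)" where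
  "matmul_contract \<xi> \<eta> = (\<lambda>z. \<Sum>x\<in>UNIV. \<Sum>y\<in>UNIV. \<xi> x * \<eta> y * matmul_tensor x y z)"

lemma sum_UNIV_prod: "(\<Sum>x\<in>(UNIV::('a::finite \<times> 'b::finite) set). f x) = (\<Sum>p\<in>UNIV. \<Sum>q\<in>UNIV. f (p, q))"
  by (simp add: sum.cartesian_product UNIV_Times_UNIV[symmetric] del: UNIV_Times_UNIV)

text \<open>In matrix terms \<open>matmul_contract \<xi> \<eta>\<close> is the product \<open>\<xi> \<eta>\<close>, stored transposed.\<close>
lemma matmul_contract_apply: "matmul_contract \<xi> \<eta> z = (\<Sum>q\<in>UNIV. \<xi> (snd z, q) * \<eta> (q, fst z))"
proof -
  have "matmul_contract \<xi> \<eta> z = (\<Sum>p\<in>UNIV. \<Sum>q\<in>UNIV. \<Sum>q'\<in>UNIV. \<Sum>s\<in>UNIV.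
     if s = fst z then (if q' = q then (if p = snd z then \<xi> (p,q) * \<eta> (q',s) else 0) else 0) else 0)"
    unfolding matmul_contract_def matmul_tensor_def sum_UNIV_prod
    by (intro sum.cong refl) auto
  also have "\<dots> = (\<Sum>p\<in>UNIV. \<Sum>q\<in>UNIV. if p = snd z then \<xi> (p,q) * \<eta> (q, fst z) else 0)"
    by (simp add: sum.delta sum.delta')
  also have "\<dots> = (\<Sum>q\<in>UNIV. \<Sum>p\<in>UNIV. if p = snd z then \<xi> (p,q) * \<eta> (q, fst z) else 0)"
    by (rule sum.swap)
  also have "\<dots> = (\<Sum>q\<in>UNIV. \<xi> (snd z, q) * \<eta> (q, fst z))"
    by (simp add: sum.delta')
  finally show ?thesis .
qed

lemma matmul_contract_std_basis:
  "matmul_contract \<xi> (std_basis (q, t)) z = \<xi> (snd z, q) * (if fst z = t then 1 else 0)"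
  unfolding matmul_contract_apply std_basis_def
  by (simp add: sum.delta sum.delta' if_distrib[of "\<lambda>x. _ * x"] cong: if_cong)

lemma independent_matmul_contract_std_basis:
  assumes "\<xi> (p, q) \<noteq> 0"
  shows "fsp.independent (range (\<lambda>t. matmul_contract \<xi> (std_basis (q, t))))"
    and "inj (\<lambda>t. matmul_contract \<xi> (std_basis (q, t)))"
  using independent_if_diagonal[of "\<lambda>t. matmul_contract \<xi> (std_basis (q, t))" "\<lambda>t. (t, p)"] assms
  by (simp_all add: matmul_contract_std_basis)

lemma subspace_range_matmul_contract: "fsp.subspace (range (\<lambda>\<zeta>. matmul_contract \<zeta> \<beta>))"
proof -
  have "module_hom fscale fscale (\<lambda>\<zeta>. matmul_contract \<zeta> \<beta>)"
    by (simp add: module_hom_iff fsp.module_axioms matmul_contract_apply fscale_def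
        fun_eq_iff distrib_right sum.distrib sum_distrib_left mult.assoc)
  from module_hom.subspace_image[OF this fsp.subspace_UNIV] show ?thesis .
qed

text \<open>If \<open>\<xi> (p, q) \<noteq> 0\<close>, row \<open>p\<close> of \<open>\<xi> E\<^sub>q\<^sub>t\<close> is \<open>\<xi> (p, q) e\<^sub>t\<close>; writing \<open>\<xi> E\<^sub>q\<^sub>t = \<zeta> \<beta>\<close>
  puts every unit row vector \<open>e\<^sub>t\<close> into the row space of \<open>\<beta>\<close>, so \<open>\<beta>\<close> is invertible.\<close>
lemma range_matmul_contract_eq_UNIV:
  assumes "\<xi> \<noteq> 0" and products: "\<And>\<eta>. matmul_contract \<xi> \<eta> \<in> range (\<lambda>\<zeta>. matmul_contract \<zeta> \<beta>)"
  shows "range (\<lambda>\<zeta>. matmul_contract \<zeta> \<beta>) = UNIV"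
proof -
  obtain p0 q0 where \<xi>0: "\<xi> (p0, q0) \<noteq> 0" using assms(1) by (auto simp: fun_eq_iff)
  have "\<exists>\<zeta>. matmul_contract \<zeta> \<beta> = matmul_contract \<xi> (std_basis (q0, t))" for t
    using products[of "std_basis (q0, t)"] by (auto simp: image_iff)
  then obtain Z where Z_eq: "\<And>t. matmul_contract (Z t) \<beta> = matmul_contract \<xi> (std_basis (q0, t))"
    by metis
  have Z: "(\<Sum>q\<in>UNIV. Z t (p, q) * \<beta> (q, s)) = \<xi> (p, q0) * (if s = t then 1 else 0)" for t p s
    using fun_cong[OF Z_eq[of t], of "(s, p)"]
    unfolding matmul_contract_std_basis by (simp add: matmul_contract_apply)
  have "std_basis (s0, p1) \<in> range (\<lambda>\<zeta>. matmul_contract \<zeta> \<beta>)" for s0 p1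
  proof
    define \<zeta> where "\<zeta> x = (if fst x = p1 then Z s0 (p0, snd x) / \<xi> (p0, q0) else 0)" for x
    show "std_basis (s0, p1) = matmul_contract \<zeta> \<beta>"
    proof
      fix z
      have "matmul_contract \<zeta> \<beta> z =
          (if snd z = p1 then (\<Sum>q\<in>UNIV. Z s0 (p0, q) * \<beta> (q, fst z)) / \<xi> (p0, q0) else 0)"
        unfolding matmul_contract_apply \<zeta>_def by (simp add: sum_divide_distrib)
      also have "\<dots> = std_basis (s0, p1) z" using \<xi>0 by (cases z) (simp add: Z std_basis_def)
      finally show "std_basis (s0, p1) z = matmul_contract \<zeta> \<beta> z" by simp
    qed
  qed simp
  hence "range std_basis \<subseteq> range (\<lambda>\<zeta>. matmul_contract \<zeta> \<beta>)" by auto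
  hence "fsp.span (range std_basis) \<subseteq> range (\<lambda>\<zeta>. matmul_contract \<zeta> \<beta>)"
    by (rule fsp.span_minimal[OF _ subspace_range_matmul_contract])
  thus ?thesis by (auto simp: span_std_basis)
qed

definition bud_index :: "nat \<Rightarrow> (nat \<times> nat \<times> nat) set" where
  "bud_index r = {(i, j, k). 1 \<le> i \<and> 1 \<le> j \<and> 1 \<le> k \<and> i + j + k \<le> r + 2}"

lemma bud_index_eq_filter:
  "bud_index r = {t \<in> {1..r} \<times> {1..r} \<times> {1..r}. case t of (i, j, k) \<Rightarrow> i + j + k \<le> r + 2}"
  by (auto simp: bud_index_def)

lemma finite_bud_index [simp]: "finite (bud_index r)"
  by (simp add: bud_index_eq_filter)

lemma sum_bud_index:
  "(\<Sum>i=1..r. \<Sum>j=1..r. \<Sum>k=1..r. if i + j + k \<le> r + 2 then f i j k else 0)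
     = (\<Sum>(i, j, k)\<in>bud_index r. f i j k)"
  by (simp add: bud_index_eq_filter sum.inter_filter sum.cartesian_product case_prod_unfold)

locale bud_decomposition =
  fixes a b c :: "nat \<Rightarrow> ('n::finite \<times> 'n) \<Rightarrow> complex" and r :: nat
  assumes decomp: "\<And>x y z. matmul_tensor x y z =
    (\<Sum>i=1..r. \<Sum>j=1..r. \<Sum>k=1..r. if i + j + k \<le> r + 2 then a i x * b j y * c k z else 0)"
begin

lemma matmul_tensor_eq_sum: "matmul_tensor x y z = (\<Sum>(i, j, k)\<in>bud_index r. a i x * b j y * c k z)"
  by (subst decomp) (rule sum_bud_index)

lemma rotate: "bud_decomposition b c a r"
proof
  fix x y z :: "'n \<times> 'n"
  have "matmul_tensor x y z = matmul_tensor z x y"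
    by (auto simp: matmul_tensor_def)
  also have "\<dots> = (\<Sum>(i, j, k)\<in>bud_index r. a i z * b j x * c k y)"
    by (rule matmul_tensor_eq_sum)
  also have "\<dots> = (\<Sum>(i, j, k)\<in>bud_index r. b i x * c j y * a k z)"
    by (rule sum.reindex_bij_witness[where i="\<lambda>(i, j, k). (k, i, j)" and j="\<lambda>(i, j, k). (j, k, i)"])
       (auto simp: bud_index_def)
  also have "\<dots> =
      (\<Sum>i=1..r. \<Sum>j=1..r. \<Sum>k=1..r. if i + j + k \<le> r + 2 then b i x * c j y * a k z else 0)"
    by (rule sum_bud_index[symmetric])
  finally show "matmul_tensor x y z = \<dots>" .
qed

lemma matmul_contract_eq_sum:
  "matmul_contract \<xi> \<eta> = (\<Sum>(i, j, k)\<in>bud_index r. fscale (contract \<xi> (a i) * contract \<eta> (b j)) (c k))"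
proof
  fix z
  have "matmul_contract \<xi> \<eta> z
      = (\<Sum>x\<in>UNIV. \<Sum>y\<in>UNIV. \<Sum>(i, j, k)\<in>bud_index r. \<xi> x * a i x * (\<eta> y * b j y) * c k z)"
    unfolding matmul_contract_def matmul_tensor_eq_sum
    by (simp add: sum_distrib_left case_prod_unfold mult_ac)
  also have "\<dots> = (\<Sum>(i, j, k)\<in>bud_index r. \<Sum>x\<in>UNIV. \<Sum>y\<in>UNIV. \<xi> x * a i x * (\<eta> y * b j y) * c k z)"
    by (simp only: sum.swap[where B="bud_index r"] case_prod_unfold)
  also have "\<dots> = (\<Sum>(i, j, k)\<in>bud_index r. contract \<xi> (a i) * contract \<eta> (b j) * c k z)"
    by (simp only: contract_def sum_product) (simp only: sum_distrib_right case_prod_unfold)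
  also have "\<dots> = (\<Sum>(i, j, k)\<in>bud_index r. fscale (contract \<xi> (a i) * contract \<eta> (b j)) (c k)) z"
    by (simp add: sum_fun_apply fscale_def case_prod_unfold)
  finally show "matmul_contract \<xi> \<eta> z = \<dots>" .
qed

lemma bud_terms_sum_in_span:
  assumes "T \<subseteq> bud_index r"
    and "\<And>i j k. (i, j, k) \<in> T \<Longrightarrow> K \<le> k \<Longrightarrow> contract \<xi> (a i) * contract \<eta> (b j) = 0"
  shows "(\<Sum>(i, j, k)\<in>T. fscale (contract \<xi> (a i) * contract \<eta> (b j)) (c k)) \<in> fsp.span (c ` {1..<K})"
proof (rule fsp.span_sum, clarify)
  fix i j k assume ijk: "(i, j, k) \<in> T"
  show "fscale (contract \<xi> (a i) * contract \<eta> (b j)) (c k) \<in> fsp.span (c ` {1..<K})"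
  proof (cases "K \<le> k")
    case True
    then show ?thesis using assms(2)[OF ijk] by (simp add: fsp.span_zero del: mult_eq_0_iff)
  next
    case False
    then have "k \<in> {1..<K}" using ijk assms(1) by (auto simp: bud_index_def)
    then show ?thesis by (intro fsp.span_scale fsp.span_base) simp
  qed
qed

lemma matmul_contract_in_span:
  assumes "\<And>i j k. (i, j, k) \<in> bud_index r \<Longrightarrow> K \<le> k \<Longrightarrow> contract \<xi> (a i) * contract \<eta> (b j) = 0"
  shows "matmul_contract \<xi> \<eta> \<in> fsp.span (c ` {1..<K})"
  unfolding matmul_contract_eq_sum by (rule bud_terms_sum_in_span) (use assms in auto)

lemma matmul_contract_leading_term:
  assumes t0: "(i0, j0, k0) \<in> bud_index r"
    and vanish: "\<And>i j k. (i, j, k) \<in> bud_index r \<Longrightarrow> k0 \<le> k \<Longrightarrow> (i, j, k) \<noteq> (i0, j0, k0) \<Longrightarrow>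
        contract \<xi> (a i) * contract \<eta> (b j) = 0"
  shows "matmul_contract \<xi> \<eta> - fscale (contract \<xi> (a i0) * contract \<eta> (b j0)) (c k0)
    \<in> fsp.span (c ` {1..<k0})"
proof -
  have "matmul_contract \<xi> \<eta> - fscale (contract \<xi> (a i0) * contract \<eta> (b j0)) (c k0)
      = (\<Sum>(i, j, k)\<in>bud_index r - {(i0, j0, k0)}. fscale (contract \<xi> (a i) * contract \<eta> (b j)) (c k))"
    unfolding matmul_contract_eq_sum by (simp add: sum.remove[OF finite_bud_index t0])
  also have "\<dots> \<in> fsp.span (c ` {1..<k0})"
    by (rule bud_terms_sum_in_span) (use vanish in auto)
  finally show ?thesis .
qed

lemma card_sq_le_dim_initial_a:
  assumes r: "r + 2 = 2 * CARD('n)^2"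
  shows "CARD('n)^2 \<le> fsp.dim (a ` {1..2 * CARD('n)^2 - CARD('n) - 1})"
proof (rule ccontr)
  define n where "n = CARD('n)"
  define m where "m = 2 * n^2 - n - 1"
  assume "\<not> ?thesis"
  hence "fsp.dim (a ` {1..m}) < CARD('n \<times> 'n)" by (simp add: m_def n_def power2_eq_square)
  then obtain \<xi> where "\<xi> \<noteq> 0" and \<xi>: "\<And>i. i \<in> {1..m} \<Longrightarrow> contract \<xi> (a i) = 0"
    by (rule exists_annihilator) blast
  then obtain p q where pq: "\<xi> (p, q) \<noteq> 0" by (auto simp: fun_eq_iff)
  have in_span: "range (\<lambda>t. matmul_contract \<xi> (std_basis (q, t))) \<subseteq> fsp.span (c ` {1..<n})"
  proof (clarify, rule matmul_contract_in_span)
    fix t i j k assume "(i, j, k) \<in> bud_index r" "n \<le> k"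
    then have "i \<in> {1..m}" using r by (auto simp: bud_index_def m_def n_def)
    then show "contract \<xi> (a i) * contract (std_basis (q, t)) (b j) = 0" by (simp add: \<xi>)
  qed
  note independent = independent_matmul_contract_std_basis[where \<xi>=\<xi> and p=p and q=q, OF pq]
  have "card (range (\<lambda>t. matmul_contract \<xi> (std_basis (q, t)))) = n"
    by (simp add: card_image independent(2) n_def)
  moreover have "0 < n" by (simp add: n_def)
  ultimately show False using independent_in_span_card_le[OF independent(1) in_span] by linarith
qed

text \<open>The terms with \<open>j \<ge> N\<close> form a triangular system: contracting with the dual
  functional \<open>\<alpha> (N - k)\<close> isolates \<open>c k\<close> modulo \<open>c 1, \<dots>, c (k - 1)\<close>.\<close>
lemma range_matmul_contract_eq_span:
  assumes r: "r + 2 = 2 * N"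
    and \<alpha>: "\<And>i i'. i \<in> {1..N} \<Longrightarrow> i' \<in> {1..N} \<Longrightarrow> contract (\<alpha> i) (a i') = (if i' = i then 1 else 0)"
    and \<beta>: "\<And>j. j \<in> {1..N} \<Longrightarrow> contract \<beta> (b j) = (if j = N then 1 else 0)"
  shows "range (\<lambda>\<zeta>. matmul_contract \<zeta> \<beta>) = fsp.span (c ` {1..<N})"
proof
  show "range (\<lambda>\<zeta>. matmul_contract \<zeta> \<beta>) \<subseteq> fsp.span (c ` {1..<N})"
  proof (clarify, rule matmul_contract_in_span)
    fix \<zeta> i j k assume "(i, j, k) \<in> bud_index r" "N \<le> k"
    then have "j \<in> {1..N}" "j \<noteq> N" using r by (auto simp: bud_index_def)
    then show "contract \<zeta> (a i) * contract \<beta> (b j) = 0" by (simp add: \<beta>)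
  qed
  let ?Im = "range (\<lambda>\<zeta>. matmul_contract \<zeta> \<beta>)"
  have "c k \<in> ?Im" if "k \<in> {1..<N}" for k
    using that
  proof (induction k rule: less_induct)
    case (less k)
    have Nk: "N - k \<in> {1..N}" using less.prems by auto
    have "fsp.span (c ` {1..<k}) \<subseteq> ?Im"
      by (rule fsp.span_minimal[OF _ subspace_range_matmul_contract]) (use less in auto)
    moreover have "matmul_contract (\<alpha> (N - k)) \<beta> - c k \<in> fsp.span (c ` {1..<k})"
    proof -
      have "matmul_contract (\<alpha> (N - k)) \<beta>
          - fscale (contract (\<alpha> (N - k)) (a (N - k)) * contract \<beta> (b N)) (c k) \<in> fsp.span (c ` {1..<k})"
      proof (rule matmul_contract_leading_term)
        show "(N - k, N, k) \<in> bud_index r" using less.prems r by (auto simp: bud_index_def)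
        fix i j k' assume ijk: "(i, j, k') \<in> bud_index r" "k \<le> k'" "(i, j, k') \<noteq> (N - k, N, k)"
        show "contract (\<alpha> (N - k)) (a i) * contract \<beta> (b j) = 0"
        proof (cases "j < N")
          case True
          then show ?thesis using ijk(1) \<beta>[of j] by (simp add: bud_index_def)
        next
          case False
          then have "i \<in> {1..N}" "i \<noteq> N - k" using ijk r by (auto simp: bud_index_def)
          then show ?thesis using \<alpha> Nk by simp
        qed
      qed
      then show ?thesis using Nk \<alpha>[of "N - k" "N - k"] \<beta>[of N] by (simp add: fscale_def)
    qed
    ultimately have "matmul_contract (\<alpha> (N - k)) \<beta> - c k \<in> ?Im" by blast
    then have "matmul_contract (\<alpha> (N - k)) \<beta> - (matmul_contract (\<alpha> (N - k)) \<beta> - c k) \<in> ?Im"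
      using fsp.subspace_diff[OF subspace_range_matmul_contract] by blast
    then show ?case by simp
  qed
  then show "fsp.span (c ` {1..<N}) \<subseteq> ?Im"
    by (intro fsp.span_minimal[OF _ subspace_range_matmul_contract]) auto
qed

lemma not_lin_indep_a_b:
  assumes r: "r + 2 = 2 * CARD('n)^2"
  shows "\<not> (lin_indep_family {1..CARD('n)^2} a \<and> lin_indep_family {1..CARD('n)^2} b)"
proof
  define N where "N = CARD('n)^2"
  have card: "card {1..N} = CARD('n \<times> 'n)" by (simp add: N_def power2_eq_square)
  have "N \<ge> 1" by (simp add: N_def)
  assume "lin_indep_family {1..CARD('n)^2} a \<and> lin_indep_family {1..CARD('n)^2} b"
  then obtain \<alpha> \<beta> where
      \<alpha>: "\<And>i i'. i \<in> {1..N} \<Longrightarrow> i' \<in> {1..N} \<Longrightarrow> contract (\<alpha> i) (a i') = (if i' = i then 1 else 0)" and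
      \<beta>: "\<And>j j'. j \<in> {1..N} \<Longrightarrow> j' \<in> {1..N} \<Longrightarrow> contract (\<beta> j) (b j') = (if j' = j then 1 else 0)"
    using exists_dual_family[OF _ _ card] unfolding N_def by (metis finite_atLeastAtMost)
  have Im: "range (\<lambda>\<zeta>. matmul_contract \<zeta> (\<beta> N)) = fsp.span (c ` {1..<N})"
    using r \<alpha> \<beta> \<open>N \<ge> 1\<close> by (intro range_matmul_contract_eq_span[where \<alpha>=\<alpha>]) (auto simp: N_def)
  have "matmul_contract (\<alpha> N) \<eta> \<in> fsp.span (c ` {1..<N})" for \<eta>
  proof (rule matmul_contract_in_span)
    fix i j k assume "(i, j, k) \<in> bud_index r" "N \<le> k"
    then have "i \<in> {1..N}" "i \<noteq> N" using r by (auto simp: bud_index_def N_def)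
    then show "contract (\<alpha> N) (a i) * contract \<eta> (b j) = 0" using \<alpha> \<open>N \<ge> 1\<close> by simp
  qed
  moreover have "\<alpha> N \<noteq> 0" using \<alpha>[of N N] \<open>N \<ge> 1\<close> by (auto simp: contract_def)
  ultimately have "range std_basis \<subseteq> fsp.span (c ` {1..<N})"
    using range_matmul_contract_eq_UNIV[of "\<alpha> N" "\<beta> N"] Im by auto
  from independent_in_span_card_le[OF independent_std_basis this]
  have "CARD('n \<times> 'n) \<le> N - 1" by (simp only: card_range_std_basis)
  moreover have "card {1..N} = N" by simp
  ultimately show False using card \<open>N \<ge> 1\<close> by linarith
qed

end

theorem proposition4p5:
  fixes a b c :: "nat \<Rightarrow> ('n::finite \<times> 'n) \<Rightarrow> complex"
    and r :: nat
  assumes n2: "CARD('n) \<ge> 2"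
    and r_def: "r = 2 * CARD('n)^2 - 2"
    and decomp: "\<And>x y z. matmul_tensor x y z =
        (\<Sum>i=1..r. \<Sum>j=1..r. \<Sum>k=1..r.
           if i + j + k \<le> r + 2 then a i x * b j y * c k z else 0)"
    and K: "in_K (a 1) (b 1) (c 1)"
  shows "\<not> (lin_indep_family {1..CARD('n)^2} a \<and> lin_indep_family {1..CARD('n)^2} b)
       \<and> \<not> (lin_indep_family {1..CARD('n)^2} a \<and> lin_indep_family {1..CARD('n)^2} c)
       \<and> \<not> (lin_indep_family {1..CARD('n)^2} b \<and> lin_indep_family {1..CARD('n)^2} c)
       \<and> fsp.dim (a ` {1..2 * CARD('n)^2 - CARD('n) - 1}) \<ge> CARD('n)^2
       \<and> fsp.dim (b ` {1..2 * CARD('n)^2 - CARD('n) - 1}) \<ge> CARD('n)^2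
       \<and> fsp.dim (c ` {1..2 * CARD('n)^2 - CARD('n) - 1}) \<ge> CARD('n)^2"
proof -
  have "1 \<le> CARD('n)^2" by (simp add: Suc_le_eq)
  then have r: "r + 2 = 2 * CARD('n)^2" using r_def by linarith
  interpret abc: bud_decomposition a b c r by unfold_locales (rule decomp)
  interpret bca: bud_decomposition b c a r by (rule abc.rotate)
  interpret cab: bud_decomposition c a b r by (rule bca.rotate)
  show ?thesis
    using abc.not_lin_indep_a_b[OF r] bca.not_lin_indep_a_b[OF r] cab.not_lin_indep_a_b[OF r]
      abc.card_sq_le_dim_initial_a[OF r] bca.card_sq_le_dim_initial_a[OF r]
      cab.card_sq_le_dim_initial_a[OF r]
    by blast
qed

end
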